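(* There exist constants $C_1$ and $C_2$, depending only on $p$, $V$ and $\Omega$, such that $$\tfrac12\mathcal E_{\mathcal D}(\mathbf u)+C_1\le\int_\Omega\Gamma(\pi_{\mathcal D}\mathbf u)\,dx\le2\,\mathcal E_{\mathcal D}(\mathbf u)+C_2\qquad\text{for all }\mathbf u\in W^{\rm en}_{\mathcal D}.$$ In particular, $\mathcal E_{\mathcal D}$ is bounded from below uniformly with respect to the discretization $\mathcal D$.
   Context: $\Omega\subset\mathbb R^d$ ($d\in\{2,3\}$) connected bounded open polyhedral. $p\in L^1_{loc}(\mathbb R_+)$ absolutely continuous and increasing on $(0,\infty)$, $p(u)\to+\infty$ as $u\to\infty$; if $p(0)=\lim_{u\downarrow0}p(u)$ is finite, $p(u)=2p(0)-p(-u)$ for $u\le0$; $I_p=(0,\infty)$ if $p(0)=-\infty$, else $\mathbb R$; $\Gamma(u)=\int_1^u(p(a)-p(1))da$ on $\bar I_p$, $\Gamma(u)=+\infty$ if $p(0)=-\infty$ and $u<0$. $V:\Omega\to\mathbb R$ Lipschitz. Discretization $\mathcal D$: cells $\mathcal M$ (disjoint open polyhedra covering $\bar\Omega$, star-shaped w.r.t. $x_K$), vertices $\mathcal V$ at positions $x_s\in\bar\Omega$, $\mathcal V_K$ vertices of $K$, $\mathcal M_s$ cells containing $s$. Mass lumping: $\alpha_{K,s}\ge0$, $\sum_{s\in\mathcal V_K}\alpha_{K,s}\le1$, $m_{K,s}=\alpha_{K,s}|K|$, $m_s=\sum_{K\in\mathcal M_s}m_{K,s}$, $m_K=|K|-\sum_sm_{K,s}$;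 disjoint open $\omega_K,\omega_{K,s}\subset K$ with closures covering $\bar K$, $|\omega_K|=m_K$, $|\omega_{K,s}|=m_{K,s}$; $\omega_s=\bigcup_{K\in\mathcal M_s}\omega_{K,s}$. $W_{\mathcal D}=\{(v_K,v_s)_{K\in\mathcal M,s\in\mathcal V}\}$, $\pi_{\mathcal D}\mathbf v=\sum_Kv_K\mathbf 1_{\omega_K}+\sum_sv_s\mathbf 1_{\omega_s}$, $\mathbf V=(V(x_K),V(x_s))$, $\mathcal E_{\mathcal D}(\mathbf v)=\int_\Omega(\Gamma(\pi_{\mathcal D}\mathbf v)+\pi_{\mathcal D}\mathbf v\,\pi_{\mathcal D}\mathbf V)dx$, $W^{\rm en}_{\mathcal D}=\{\mathbf v:\mathcal E_{\mathcal D}(\mathbf v)<\infty\}$. *)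

theory Defs
  imports "HOL-Analysis.Analysis"
begin

definition abs_continuous_on :: "real set \<Rightarrow> (real \<Rightarrow> real) \<Rightarrow> bool" where
  "abs_continuous_on S f \<longleftrightarrow>
     (\<forall>\<epsilon>>0. \<exists>\<delta>>0. \<forall>(n::nat) (a::nat \<Rightarrow> real) (b::nat \<Rightarrow> real).
        (\<forall>i<n. a i \<le> b i \<and> {a i..b i} \<subseteq> S) \<and>
        (\<forall>i<n. \<forall>j<n. i \<noteq> j \<longrightarrow> b i \<le> a j \<or> b j \<le> a i) \<and>
        (\<Sum>i<n. b i - a i) < \<delta>
        \<longrightarrow> (\<Sum>i<n. \<bar>f (b i) - f (a i)\<bar>) < \<epsilon>)"

definition open_polyhedral :: "('a::euclidean_space) set \<Rightarrow> bool" where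
  "open_polyhedral K \<longleftrightarrow> open K \<and> bounded K \<and> interior (closure K) = K \<and>
     (\<exists>F. finite F \<and> (\<forall>P\<in>F. polytope P) \<and> closure K = \<Union>F)"

text \<open>The functional Gamma; p0 = lim_{u -> 0+} p u (possibly -infinity).\<close>
definition Gamma_fun :: "(real \<Rightarrow> real) \<Rightarrow> ereal \<Rightarrow> real \<Rightarrow> ereal" where
  "Gamma_fun p p0 u = (if p0 = -\<infinity> \<and> u < 0 then \<infinity>
                       else ereal (LBINT a=1..u. p a - p 1))"

text \<open>Cells are indexed by the finite set Mc of naturals,
  vertices by the finite set Vs of naturals.
  cell K: open cell, xK K: its centre; xs s: vertex position; VK K: vertices of K;
  alpha K s: mass-lumping weights; omK K, omKs K s: the sets omega_K, omega_{K,s}.\<close>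
definition discretization ::
  "('a::euclidean_space) set \<Rightarrow> nat set \<Rightarrow> (nat \<Rightarrow> 'a set) \<Rightarrow> (nat \<Rightarrow> 'a) \<Rightarrow>
   nat set \<Rightarrow> (nat \<Rightarrow> 'a) \<Rightarrow> (nat \<Rightarrow> nat set) \<Rightarrow> (nat \<Rightarrow> nat \<Rightarrow> real) \<Rightarrow>
   (nat \<Rightarrow> 'a set) \<Rightarrow> (nat \<Rightarrow> nat \<Rightarrow> 'a set) \<Rightarrow> bool" where
  "discretization \<Omega> Mc cell xK Vs xs VK alpha omK omKs \<longleftrightarrow>
     finite Mc \<and> finite Vs \<and>
     (\<forall>K\<in>Mc. open_polyhedral (cell K) \<and> cell K \<noteq> {} \<and> cell K \<subseteq> \<Omega>) \<and>
     (\<forall>K\<in>Mc. \<forall>L\<in>Mc. K \<noteq> L \<longrightarrow> cell K \<inter> cell L = {}) \<and>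
     (\<Union>K\<in>Mc. closure (cell K)) = closure \<Omega> \<and>
     (\<forall>K\<in>Mc. xK K \<in> cell K \<and> (\<forall>y\<in>cell K. closed_segment (xK K) y \<subseteq> cell K)) \<and>
     inj_on xs Vs \<and> (\<forall>s\<in>Vs. xs s \<in> closure \<Omega>) \<and>
     (\<forall>K\<in>Mc. VK K \<subseteq> Vs \<and> (\<forall>s\<in>VK K. xs s \<in> frontier (cell K))) \<and>
     (\<forall>K\<in>Mc. (\<forall>s\<in>VK K. alpha K s \<ge> 0) \<and> (\<Sum>s\<in>VK K. alpha K s) \<le> 1) \<and>
     (\<forall>K\<in>Mc.
        open (omK K) \<and> omK K \<subseteq> cell K \<and>
        (\<forall>s\<in>VK K. open (omKs K s) \<and> omKs K s \<subseteq> cell K \<and> omK K \<inter> omKs K s = {}) \<and>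
        (\<forall>s\<in>VK K. \<forall>t\<in>VK K. s \<noteq> t \<longrightarrow> omKs K s \<inter> omKs K t = {}) \<and>
        closure (omK K) \<union> (\<Union>s\<in>VK K. closure (omKs K s)) = closure (cell K) \<and>
        measure lebesgue (omK K) =
          measure lebesgue (cell K) - (\<Sum>s\<in>VK K. alpha K s * measure lebesgue (cell K)) \<and>
        (\<forall>s\<in>VK K. measure lebesgue (omKs K s) = alpha K s * measure lebesgue (cell K)))"

definition omega_s :: "nat set \<Rightarrow> (nat \<Rightarrow> nat set) \<Rightarrow> (nat \<Rightarrow> nat \<Rightarrow> 'a set) \<Rightarrow> nat \<Rightarrow> 'a set" where
  "omega_s Mc VK omKs s = (\<Union>K\<in>{K\<in>Mc. s \<in> VK K}. omKs K s)"

text \<open>Reconstruction operator pi_D: v = (vc K)_K, (vs s)_s.\<close>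
definition pi_D :: "nat set \<Rightarrow> nat set \<Rightarrow> (nat \<Rightarrow> nat set) \<Rightarrow> (nat \<Rightarrow> 'a set) \<Rightarrow>
    (nat \<Rightarrow> nat \<Rightarrow> 'a set) \<Rightarrow> (nat \<Rightarrow> real) \<Rightarrow> (nat \<Rightarrow> real) \<Rightarrow> 'a \<Rightarrow> real" where
  "pi_D Mc Vs VK omK omKs vc vs x =
     (\<Sum>K\<in>Mc. vc K * indicator (omK K) x) +
     (\<Sum>s\<in>Vs. vs s * indicator (omega_s Mc VK omKs s) x)"

definition energy_D :: "(real \<Rightarrow> real) \<Rightarrow> ereal \<Rightarrow> ('a::euclidean_space \<Rightarrow> real) \<Rightarrow> 'a set \<Rightarrow>
    nat set \<Rightarrow> (nat \<Rightarrow> 'a) \<Rightarrow> nat set \<Rightarrow> (nat \<Rightarrow> 'a) \<Rightarrow> (nat \<Rightarrow> nat set) \<Rightarrow>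
    (nat \<Rightarrow> 'a set) \<Rightarrow> (nat \<Rightarrow> nat \<Rightarrow> 'a set) \<Rightarrow> (nat \<Rightarrow> real) \<Rightarrow> (nat \<Rightarrow> real) \<Rightarrow> ereal" where
  "energy_D p p0 V \<Omega> Mc xK Vs xs VK omK omKs vc vs =
     (let u = pi_D Mc Vs VK omK omKs vc vs;
          W = pi_D Mc Vs VK omK omKs (\<lambda>K. V (xK K)) (\<lambda>s. V (xs s));
          f = (\<lambda>x. real_of_ereal (Gamma_fun p p0 (u x)) + u x * W x)
      in if (AE x in lebesgue. x \<in> \<Omega> \<longrightarrow> Gamma_fun p p0 (u x) \<noteq> \<infinity>) \<and>
            set_integrable lebesgue \<Omega> f
         then ereal (LINT x:\<Omega>|lebesgue. f x) else \<infinity>)"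

end

theory Submission
  imports Defs
begin

text \<open>Since p is nondecreasing and unbounded (and, when p(0) is finite, extended oddly across
  p(0)), the function Gamma grows superlinearly: for every M there is C with
  Gamma(u) \<ge> M |u| - C.  V is bounded by some B on the closure of Omega, so taking M = 2B gives
  |pi_D u pi_D V| \<le> Gamma(pi_D u)/2 + C pointwise.  Integrating over Omega, which has finite
  measure, bounds the coupling term of the energy by half the Gamma term plus a constant, and
  both inequalities follow.\<close>

lemma interval_integral_from_one:
  "(LBINT a=1..ereal u. f a) =
     (if 1 \<le> u then LINT a:{1<..<u}|lborel. f a else - (LINT a:{u<..<1}|lborel. f a))"
  by (simp add: interval_lebesgue_integral_def one_ereal_def)

lemma set_integrable_const:
  assumes "A \<in> sets M" "emeasure M A \<noteq> \<infinity>"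
  shows "set_integrable M A (\<lambda>_. c :: real)"
  using assms unfolding set_integrable_def
  by (cases "c = 0") (auto intro!: integrable_scaleR_left integrable_real_indicator simp: less_top)

lemma set_integrable_const_Ioo: "set_integrable lborel {x<..<y::real} (\<lambda>_. c :: real)"
  using emeasure_bounded_finite[of "{x<..<y}"] by (intro set_integrable_const) auto

lemma set_integral_ge_on_subinterval:
  fixes g :: "real \<Rightarrow> real"
  assumes "x \<le> c" "c \<le> d" "d \<le> y" "set_integrable lborel {x<..<y} g"
    and "\<And>a. a \<in> {x<..<y} \<Longrightarrow> 0 \<le> g a" "\<And>a. a \<in> {c<..<d} \<Longrightarrow> M \<le> g a" "0 \<le> M"
  shows "M * (d - c) \<le> (LINT a:{x<..<y}|lborel. g a)"
proof -
  have "set_integrable lborel {x<..<y} (\<lambda>a. M * indicator {c<..<d} a)"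
    unfolding set_integrable_def using assms(2)
    by (intro integrable_mult_indicator) (auto intro!: integrable_real_indicator simp: emeasure_lborel_Ioo)
  then have "(LINT a:{x<..<y}|lborel. M * indicator {c<..<d} a) \<le> (LINT a:{x<..<y}|lborel. g a)"
    using assms by (intro set_integral_mono[OF _ assms(4)]) (auto split: split_indicator)
  moreover have "(LINT a:{x<..<y}|lborel. M * indicator {c<..<d} a) = M * (d - c)"
  proof -
    have "(LINT a:{x<..<y}|lborel. M * indicator {c<..<d} a) = (LINT a|lborel. M * indicator {c<..<d} a)"
      unfolding set_lebesgue_integral_def using assms(1-3)
      by (intro Bochner_Integration.integral_cong) (auto split: split_indicator)
    then show ?thesis using assms(2) by simp
  qed
  ultimately show ?thesis by (simp del: set_integral_mult_right)
qed

locale pressure_law =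
  fixes p :: "real \<Rightarrow> real" and p0 :: ereal
  assumes p_loc: "\<forall>b>0. set_integrable lborel {0..b} p"
    and p_mono: "mono_on {0<..} p"
    and p_infty: "filterlim p at_top at_top"
    and p0_lim: "((\<lambda>u. ereal (p u)) \<longlongrightarrow> p0) (at_right 0)"
    and p_odd: "p0 \<noteq> -\<infinity> \<Longrightarrow> \<forall>u\<le>0. p u = 2 * real_of_ereal p0 - p (- u)"
begin

lemma p0_le:
  assumes "0 < t"
  shows "p0 \<le> ereal (p t)"
proof (rule tendsto_upperbound[OF p0_lim])
  show "\<forall>\<^sub>F a in at_right 0. ereal (p a) \<le> ereal (p t)"
    using eventually_at_right_real[OF assms]
    by eventually_elim (use p_mono in \<open>auto intro: mono_onD\<close>)
qed simp

lemma p0_real: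
  assumes "p0 \<noteq> -\<infinity>"
  obtains q where "p0 = ereal q" "q \<le> p 1" "\<And>u. u \<le> 0 \<Longrightarrow> p u = 2 * q - p (- u)"
proof -
  have "p0 \<noteq> \<infinity>" using p0_le[of 1] by auto
  with assms obtain q where q: "p0 = ereal q" by (cases p0) auto
  then show thesis using that p0_le[of 1] p_odd assms by auto
qed

lemma p_mono_le:
  assumes "a \<le> b" "0 < a \<or> p0 \<noteq> -\<infinity>"
  shows "p a \<le> p b"
proof (cases "0 < a")
  case True
  then show ?thesis using assms p_mono by (auto intro: mono_onD)
next
  case False
  with assms obtain q where q: "p0 = ereal q" "\<And>u. u \<le> 0 \<Longrightarrow> p u = 2 * q - p (- u)"
    using p0_real by metis
  have ge_q: "q \<le> p t" if "0 \<le> t" for t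
  proof (cases "t = 0")
    case True then show ?thesis using q(2)[of 0] by simp
  next
    case False then show ?thesis using p0_le[of t] q(1) that by simp
  qed
  show ?thesis
  proof (cases "b \<le> 0")
    case True
    have "p (- b) \<le> p (- a)"
    proof (cases "b = 0")
      case True then show ?thesis using ge_q[of "-a"] q(2)[of 0] \<open>\<not> 0 < a\<close> by simp
    next
      case False then show ?thesis using True assms(1) p_mono by (auto intro: mono_onD)
    qed
    then show ?thesis using q(2)[of a] q(2)[of b] True assms(1) by simp
  next
    case False
    then show ?thesis using q(2)[of a] ge_q[of "-a"] ge_q[of b] \<open>\<not> 0 < a\<close> by simp
  qed
qed

lemma set_integrable_p:
  assumes "0 \<le> x \<or> p0 \<noteq> -\<infinity>"
  shows "set_integrable lborel {x<..<y} p"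
proof -
  have pos: "set_integrable lborel {x<..<y} p" if "0 \<le> x" for x y
    using p_loc[rule_format, of "\<bar>y\<bar> + 1"] by (rule set_integrable_subset) (use that in auto)
  show ?thesis
  proof (cases "0 \<le> x")
    case False
    with assms obtain q where q: "\<And>u. u \<le> 0 \<Longrightarrow> p u = 2 * q - p (- u)"
      using p0_real by metis
    have "integrable lborel (\<lambda>a. indicator {0<..<-x} a *\<^sub>R p a)"
      using pos[of 0 "-x"] by (simp add: set_integrable_def)
    then have "integrable lborel (\<lambda>a. indicator {0<..<-x} (0 + -1 * a) *\<^sub>R p (0 + -1 * a))"
      by (subst lborel_integrable_real_affine_iff) auto
    also have "(\<lambda>a. indicator {0<..<-x} (0 + -1 * a) *\<^sub>R p (0 + -1 * a)) =
               (\<lambda>a. indicator {x<..<0} a *\<^sub>R p (- a))"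
      by (auto split: split_indicator)
    finally have "set_integrable lborel {x<..<0} (\<lambda>a. p (- a))"
      by (simp add: set_integrable_def)
    then have "set_integrable lborel {x<..<0} (\<lambda>a. 2 * q - p (- a))"
      using set_integrable_const_Ioo by (intro set_integral_diff) auto
    also have "(\<lambda>a. indicator {x<..<0} a *\<^sub>R (2 * q - p (- a))) = (\<lambda>a. indicator {x<..<0} a *\<^sub>R p a)"
      using q by (auto split: split_indicator)
    then have "set_integrable lborel {x<..<0} (\<lambda>a. 2 * q - p (- a)) \<longleftrightarrow> set_integrable lborel {x<..<0} p"
      by (simp add: set_integrable_def)
    finally have "set_integrable lborel ({x<..<0} \<union> {0..\<bar>y\<bar> + 1}) p"
      using p_loc by (intro set_integrable_Un) auto
    then show ?thesis by (rule set_integrable_subset) auto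
  qed (use pos in auto)
qed

lemma p_eventually_far_from_p1:
  obtains a0 where "1 \<le> a0" "\<And>a. a0 \<le> a \<Longrightarrow> p 1 + M \<le> p a"
    "\<And>a. a0 \<le> a \<Longrightarrow> p0 \<noteq> -\<infinity> \<Longrightarrow> p (- a) \<le> p 1 - M"
proof -
  have "\<forall>\<^sub>F a in at_top. p 1 + M \<le> p a" using p_infty by (simp add: filterlim_at_top)
  then obtain N where N: "\<And>a. N \<le> a \<Longrightarrow> p 1 + M \<le> p a" by (auto simp: eventually_at_top_linorder)
  show thesis
  proof (rule that[of "max 1 N"])
    fix a assume a: "max 1 N \<le> a"
    then show "p 1 + M \<le> p a" using N by simp
    assume "p0 \<noteq> -\<infinity>"
    then obtain q where q: "q \<le> p 1" "\<And>u. u \<le> 0 \<Longrightarrow> p u = 2 * q - p (- u)"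
      using p0_real by metis
    have "p (- a) = 2 * q - p a" using q(2)[of "- a"] a by simp
    then show "p (- a) \<le> p 1 - M" using q(1) N[of a] a by simp
  qed simp
qed

lemma Gamma_finiteD:
  assumes "Gamma_fun p p0 u \<noteq> \<infinity>"
  shows "0 \<le> u \<or> p0 \<noteq> -\<infinity>"
    and "real_of_ereal (Gamma_fun p p0 u) = (LBINT a=1..ereal u. p a - p 1)"
  using assms by (auto simp: Gamma_fun_def)

lemma Gamma_ge_above_one:
  assumes "1 \<le> u" "0 \<le> M" "1 \<le> a0" "\<And>a. a0 \<le> a \<Longrightarrow> p 1 + M \<le> p a"
  shows "M * max 0 (\<bar>u\<bar> - a0) \<le> real_of_ereal (Gamma_fun p p0 u)"
proof -
  have int: "set_integrable lborel {1<..<u} (\<lambda>a. p a - p 1)"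
    using set_integrable_p set_integrable_const_Ioo by (intro set_integral_diff) auto
  have "M * (u - min a0 u) \<le> (LINT a:{1<..<u}|lborel. p a - p 1)"
  proof (rule set_integral_ge_on_subinterval[OF _ _ _ int])
    show "0 \<le> p a - p 1" if "a \<in> {1<..<u}" for a
      using p_mono_le[of 1 a] that by simp
    show "M \<le> p a - p 1" if "a \<in> {min a0 u<..<u}" for a
    proof -
      have "a0 \<le> a" using that by (simp add: min_def split: if_splits)
      then show ?thesis using assms(4) by fastforce
    qed
  qed (use assms in auto)
  moreover have "max 0 (\<bar>u\<bar> - a0) \<le> u - min a0 u"
    using assms(1) by (auto simp: min_def max_def)
  then have "M * max 0 (\<bar>u\<bar> - a0) \<le> M * (u - min a0 u)"
    by (rule mult_left_mono) (rule assms(2))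
  moreover have "real_of_ereal (Gamma_fun p p0 u) = (LINT a:{1<..<u}|lborel. p a - p 1)"
    using assms(1) by (simp add: Gamma_fun_def interval_integral_from_one)
  ultimately show ?thesis by linarith
qed

lemma Gamma_ge_below_one:
  assumes "u < 1" "Gamma_fun p p0 u \<noteq> \<infinity>" "0 \<le> M" "1 \<le> a0"
    and "\<And>a. a0 \<le> a \<Longrightarrow> p0 \<noteq> -\<infinity> \<Longrightarrow> p (- a) \<le> p 1 - M"
  shows "M * max 0 (\<bar>u\<bar> - a0) \<le> real_of_ereal (Gamma_fun p p0 u)"
proof -
  note dom = Gamma_finiteD(1)[OF assms(2)]
  have int: "set_integrable lborel {u<..<1} (\<lambda>a. p 1 - p a)"
    using set_integrable_p[OF dom] set_integrable_const_Ioo by (intro set_integral_diff) auto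
  have "M * (max u (- a0) - u) \<le> (LINT a:{u<..<1}|lborel. p 1 - p a)"
  proof (rule set_integral_ge_on_subinterval[OF _ _ _ int])
    show "0 \<le> p 1 - p a" if "a \<in> {u<..<1}" for a
      using p_mono_le[of a 1] that dom by force
    show "M \<le> p 1 - p a" if "a \<in> {u<..<max u (- a0)}" for a
    proof -
      have "a0 \<le> - a" "u < 0" using that assms(4) by (auto simp: max_def split: if_splits)
      then show ?thesis using dom assms(5)[of "- a"] by simp
    qed
  qed (use assms in auto)
  moreover have "max 0 (\<bar>u\<bar> - a0) \<le> max u (- a0) - u"
    using assms(1,4) by (cases "0 \<le> u") (auto simp: max_def)
  then have "M * max 0 (\<bar>u\<bar> - a0) \<le> M * (max u (- a0) - u)"
    by (rule mult_left_mono) (rule assms(3))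
  moreover have "set_integrable lborel {u<..<1} (\<lambda>a. p a - p 1)"
    using set_integrable_p[OF dom] set_integrable_const_Ioo by (intro set_integral_diff) auto
  then have "real_of_ereal (Gamma_fun p p0 u) = (LINT a:{u<..<1}|lborel. p 1 - p a)"
    using assms(1) Gamma_finiteD(2)[OF assms(2)]
      set_integral_uminus[of lborel "{u<..<1}" "\<lambda>a. p a - p 1"]
    by (simp add: interval_integral_from_one)
  ultimately show ?thesis by linarith
qed

text \<open>Gamma is the integral from 1 of a nondecreasing integrand vanishing at 1, whose modulus
  eventually exceeds M on both sides.\<close>
lemma Gamma_superlinear:
  assumes "0 \<le> M"
  obtains a0 where
    "\<And>u. Gamma_fun p p0 u \<noteq> \<infinity> \<Longrightarrow> M * max 0 (\<bar>u\<bar> - a0) \<le> real_of_ereal (Gamma_fun p p0 u)"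
proof -
  obtain a0 where a0: "1 \<le> a0" "\<And>a. a0 \<le> a \<Longrightarrow> p 1 + M \<le> p a"
    "\<And>a. a0 \<le> a \<Longrightarrow> p0 \<noteq> -\<infinity> \<Longrightarrow> p (- a) \<le> p 1 - M"
    using p_eventually_far_from_p1 by blast
  show thesis
  proof (rule that)
    fix u assume "Gamma_fun p p0 u \<noteq> \<infinity>"
    then show "M * max 0 (\<bar>u\<bar> - a0) \<le> real_of_ereal (Gamma_fun p p0 u)"
      using Gamma_ge_above_one[OF _ assms a0(1,2)] Gamma_ge_below_one[OF _ _ assms a0(1,3)]
      by (cases "1 \<le> u") auto
  qed
qed

corollary Gamma_dominates_linear:
  assumes "0 \<le> B"
  obtains C where
    "\<And>v. Gamma_fun p p0 v \<noteq> \<infinity> \<Longrightarrow> B * \<bar>v\<bar> \<le> real_of_ereal (Gamma_fun p p0 v) / 2 + C"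
proof -
  obtain a0 where a0: "\<And>v. Gamma_fun p p0 v \<noteq> \<infinity> \<Longrightarrow>
      2 * B * max 0 (\<bar>v\<bar> - a0) \<le> real_of_ereal (Gamma_fun p p0 v)"
    using Gamma_superlinear[of "2 * B"] assms by auto
  show thesis
  proof (rule that)
    fix v assume v: "Gamma_fun p p0 v \<noteq> \<infinity>"
    have "B * (\<bar>v\<bar> - a0) \<le> B * max 0 (\<bar>v\<bar> - a0)"
      by (rule mult_left_mono) (simp_all add: assms)
    then show "B * \<bar>v\<bar> \<le> real_of_ereal (Gamma_fun p p0 v) / 2 + B * a0"
      using a0[OF v] by argo
  qed
qed

end

lemma abs_sum_indicator_disjoint_le:
  fixes c :: "'i \<Rightarrow> real"
  assumes "disjoint_family_on A I" "\<And>i. i \<in> I \<Longrightarrow> \<bar>c i\<bar> \<le> B" "0 \<le> B"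
  shows "\<bar>\<Sum>i\<in>I. c i * indicator (A i) x\<bar> \<le> B"
proof (cases "\<exists>j\<in>I. x \<in> A j")
  case True
  then obtain j where j: "j \<in> I" "x \<in> A j" by blast
  have "(\<Sum>i\<in>I. c i * indicator (A i) x) = (\<Sum>i\<in>I. if i = j then c j else 0)"
    using assms(1) j by (intro sum.cong) (auto simp: disjoint_family_on_def indicator_def)
  then show ?thesis using j assms by (cases "finite I") auto
next
  case False
  then have "(\<Sum>i\<in>I. c i * indicator (A i) x) = 0" by (intro sum.neutral) auto
  then show ?thesis using assms(3) by simp
qed

lemma abs_sum_indicator_le_sum_abs:
  fixes c :: "'i \<Rightarrow> real"
  shows "\<bar>\<Sum>i\<in>I. c i * indicator (A i) x\<bar> \<le> (\<Sum>i\<in>I. \<bar>c i\<bar>)"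
proof -
  have "\<bar>\<Sum>i\<in>I. c i * indicator (A i) x\<bar> \<le> (\<Sum>i\<in>I. \<bar>c i * indicator (A i) x\<bar>)"
    by (rule sum_abs)
  also have "\<dots> \<le> (\<Sum>i\<in>I. \<bar>c i\<bar>)"
    by (rule sum_mono) (simp add: indicator_def)
  finally show ?thesis .
qed

lemma abs_pi_D_le_sum: "\<bar>pi_D Mc Vs VK omK omKs a b x\<bar> \<le> (\<Sum>K\<in>Mc. \<bar>a K\<bar>) + (\<Sum>s\<in>Vs. \<bar>b s\<bar>)"
  unfolding pi_D_def
  by (rule order_trans[OF abs_triangle_ineq add_mono]) (rule abs_sum_indicator_le_sum_abs)+

context
  fixes \<Omega> Mc cell xK Vs xs VK alpha omK omKs
  assumes D: "discretization \<Omega> Mc cell xK Vs xs VK alpha omK omKs"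
begin

lemma pi_D_measurable: "pi_D Mc Vs VK omK omKs a b \<in> borel_measurable lebesgue"
proof -
  have "open (omK K)" if "K \<in> Mc" for K
    using D that by (simp add: discretization_def)
  moreover have "open (omega_s Mc VK omKs s)" for s
    using D unfolding omega_s_def discretization_def by (intro open_UN) auto
  ultimately show ?thesis
    unfolding pi_D_def[abs_def]
    by (intro borel_measurable_add borel_measurable_sum borel_measurable_times borel_measurable_const
        borel_measurable_indicator) (auto intro: borel_open)
qed

lemma discretization_cells_disjoint: "K \<in> Mc \<Longrightarrow> L \<in> Mc \<Longrightarrow> K \<noteq> L \<Longrightarrow> cell K \<inter> cell L = {}"
  and discretization_omK_subset: "K \<in> Mc \<Longrightarrow> omK K \<subseteq> cell K"
  and discretization_omKs_subset: "K \<in> Mc \<Longrightarrow> s \<in> VK K \<Longrightarrow> omKs K s \<subseteq> cell K"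
  and discretization_omK_omKs_disjoint: "K \<in> Mc \<Longrightarrow> s \<in> VK K \<Longrightarrow> omK K \<inter> omKs K s = {}"
  and discretization_omKs_disjoint:
    "K \<in> Mc \<Longrightarrow> s \<in> VK K \<Longrightarrow> t \<in> VK K \<Longrightarrow> s \<noteq> t \<Longrightarrow> omKs K s \<inter> omKs K t = {}"
  and discretization_centre_in_cell: "K \<in> Mc \<Longrightarrow> xK K \<in> cell K"
  and discretization_cell_subset: "K \<in> Mc \<Longrightarrow> cell K \<subseteq> \<Omega>"
  and discretization_vertex_in_closure: "s \<in> Vs \<Longrightarrow> xs s \<in> closure \<Omega>"
  using D by (simp_all add: discretization_def)

lemma disjoint_family_omK: "disjoint_family_on omK Mc"
  unfolding disjoint_family_on_def using discretization_cells_disjoint discretization_omK_subset by blast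

lemma disjoint_family_omega_s: "disjoint_family (omega_s Mc VK omKs)"
  unfolding disjoint_family_on_def
proof (intro ballI impI)
  fix s t :: nat assume "s \<noteq> t"
  show "omega_s Mc VK omKs s \<inter> omega_s Mc VK omKs t = {}"
  proof (rule ccontr)
    assume "omega_s Mc VK omKs s \<inter> omega_s Mc VK omKs t \<noteq> {}"
    then obtain x K L where "K \<in> Mc" "s \<in> VK K" "x \<in> omKs K s" "L \<in> Mc" "t \<in> VK L" "x \<in> omKs L t"
      by (auto simp: omega_s_def)
    with \<open>s \<noteq> t\<close> show False
      using discretization_cells_disjoint[of K L] discretization_omKs_subset
        discretization_omKs_disjoint[of K s t]
      by (cases "K = L") blast+
  qed
qed

lemma omK_disjoint_omega_s: "K \<in> Mc \<Longrightarrow> omK K \<inter> omega_s Mc VK omKs s = {}"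
  unfolding omega_s_def
  using discretization_cells_disjoint discretization_omK_subset discretization_omKs_subset
    discretization_omK_omKs_disjoint
  by blast

text \<open>The sets omega_K and omega_s are pairwise disjoint, so at each point pi_D picks at most
  one of its coefficients.\<close>
lemma abs_pi_D_le:
  assumes "\<And>K. K \<in> Mc \<Longrightarrow> \<bar>a K\<bar> \<le> B" "\<And>s. s \<in> Vs \<Longrightarrow> \<bar>b s\<bar> \<le> B" "0 \<le> B"
  shows "\<bar>pi_D Mc Vs VK omK omKs a b x\<bar> \<le> B"
proof (cases "\<exists>K\<in>Mc. x \<in> omK K")
  case True
  then have "(\<Sum>s\<in>Vs. b s * indicator (omega_s Mc VK omKs s) x) = 0"
    using omK_disjoint_omega_s by (intro sum.neutral) (auto simp: indicator_def)
  then show ?thesis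
    unfolding pi_D_def using abs_sum_indicator_disjoint_le[OF disjoint_family_omK assms(1,3)] by simp
next
  case False
  then have "(\<Sum>K\<in>Mc. a K * indicator (omK K) x) = 0" by (intro sum.neutral) auto
  moreover have "disjoint_family_on (omega_s Mc VK omKs) Vs"
    using disjoint_family_omega_s by (rule disjoint_family_on_mono[rotated]) simp
  ultimately show ?thesis
    unfolding pi_D_def using abs_sum_indicator_disjoint_le[OF _ assms(2,3)] by simp
qed

end

lemma set_integral_comparison:
  fixes g h :: "'a \<Rightarrow> real"
  assumes S: "S \<in> sets M" "emeasure M S \<noteq> \<infinity>"
    and int: "set_integrable M S g" "set_integrable M S h"
    and bound: "AE x in M. x \<in> S \<longrightarrow> \<bar>h x\<bar> \<le> g x / 2 + C"
  defines "I \<equiv> LINT x:S|M. g x" and "J \<equiv> LINT x:S|M. h x"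
  shows "(I + J) / 2 - C * measure M S \<le> I" and "I \<le> 2 * (I + J) + 2 * C * measure M S"
proof -
  have const: "set_integrable M S (\<lambda>_. C)"
    using S by (rule set_integrable_const)
  have "\<bar>J\<bar> \<le> (LINT x:S|M. \<bar>h x\<bar>)"
    unfolding J_def using set_integral_norm_bound[OF int(2)] by simp
  also have "\<dots> \<le> (LINT x:S|M. g x / 2 + C)"
  proof (rule set_integral_mono_AE)
    show "set_integrable M S (\<lambda>x. \<bar>h x\<bar>)" using int(2) by (rule set_integrable_abs)
    show "set_integrable M S (\<lambda>x. g x / 2 + C)"
      using int(1) const by (intro set_integral_add(1) set_integrable_divide)
  qed (use bound in \<open>auto elim: eventually_mono\<close>)
  also have "\<dots> = I / 2 + C * measure M S"
    using int(1) const S unfolding I_def by (simp add: set_integral_add set_integral_const)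
  finally have "\<bar>J\<bar> \<le> I / 2 + C * measure M S" .
  then have J: "J \<le> I / 2 + C * measure M S" "- J \<le> I / 2 + C * measure M S"
    by (simp_all add: abs_le_iff)
  from J show "(I + J) / 2 - C * measure M S \<le> I" by argo
  from J show "I \<le> 2 * (I + J) + 2 * C * measure M S" by argo
qed

lemma energy_D_finiteD:
  fixes V :: "'a::euclidean_space \<Rightarrow> real"
  assumes "energy_D p p0 V \<Omega> Mc xK Vs xs VK omK omKs vc vs < \<infinity>"
  defines "u \<equiv> pi_D Mc Vs VK omK omKs vc vs"
    and "W \<equiv> pi_D Mc Vs VK omK omKs (\<lambda>K. V (xK K)) (\<lambda>s. V (xs s))"
  shows "AE x in lebesgue. x \<in> \<Omega> \<longrightarrow> Gamma_fun p p0 (u x) \<noteq> \<infinity>"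
    and "set_integrable lebesgue \<Omega> (\<lambda>x. real_of_ereal (Gamma_fun p p0 (u x)) + u x * W x)"
    and "energy_D p p0 V \<Omega> Mc xK Vs xs VK omK omKs vc vs =
           ereal (LINT x:\<Omega>|lebesgue. real_of_ereal (Gamma_fun p p0 (u x)) + u x * W x)"
  using assms(1) unfolding energy_D_def Let_def u_def[symmetric] W_def[symmetric]
  by (auto split: if_splits)

lemma Gamma_integral_bounds:
  fixes V :: "'a::euclidean_space \<Rightarrow> real"
  assumes D: "discretization \<Omega> Mc cell xK Vs xs VK alpha omK omKs"
    and E_finite: "energy_D p p0 V \<Omega> Mc xK Vs xs VK omK omKs vc vs < \<infinity>"
    and \<Omega>: "\<Omega> \<in> lmeasurable"
    and V_bound: "\<And>x. x \<in> closure \<Omega> \<Longrightarrow> \<bar>V x\<bar> \<le> B" and "0 \<le> B"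
    and Gamma_ge: "\<And>v. Gamma_fun p p0 v \<noteq> \<infinity> \<Longrightarrow> B * \<bar>v\<bar> \<le> real_of_ereal (Gamma_fun p p0 v) / 2 + C"
  defines "E \<equiv> real_of_ereal (energy_D p p0 V \<Omega> Mc xK Vs xs VK omK omKs vc vs)"
    and "G \<equiv> \<lambda>x. real_of_ereal (Gamma_fun p p0 (pi_D Mc Vs VK omK omKs vc vs x))"
  shows "set_integrable lebesgue \<Omega> G"
    and "E / 2 - C * measure lebesgue \<Omega> \<le> (LINT x:\<Omega>|lebesgue. G x)"
    and "(LINT x:\<Omega>|lebesgue. G x) \<le> 2 * E + 2 * C * measure lebesgue \<Omega>"
proof -
  define u where "u = pi_D Mc Vs VK omK omKs vc vs"
  define W where "W = pi_D Mc Vs VK omK omKs (\<lambda>K. V (xK K)) (\<lambda>s. V (xs s))"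
  note energy = energy_D_finiteD[OF E_finite, folded u_def W_def]
  have W_bound: "\<bar>W x\<bar> \<le> B" for x
    unfolding W_def
  proof (rule abs_pi_D_le[OF D _ _ \<open>0 \<le> B\<close>])
    show "\<bar>V (xK K)\<bar> \<le> B" if "K \<in> Mc" for K
      using V_bound discretization_centre_in_cell[OF D that] discretization_cell_subset[OF D that]
        closure_subset by blast
    show "\<bar>V (xs s)\<bar> \<le> B" if "s \<in> Vs" for s
      using V_bound discretization_vertex_in_closure[OF D that] .
  qed
  have \<Omega>_sets: "\<Omega> \<in> sets lebesgue" "emeasure lebesgue \<Omega> \<noteq> \<infinity>"
    using \<Omega> by (auto simp: fmeasurable_def)
  have uW_int: "set_integrable lebesgue \<Omega> (\<lambda>x. u x * W x)"
  proof (rule set_integrable_bound)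
    define Bu where "Bu = (\<Sum>K\<in>Mc. \<bar>vc K\<bar>) + (\<Sum>s\<in>Vs. \<bar>vs s\<bar>)"
    show "set_integrable lebesgue \<Omega> (\<lambda>_. Bu * B)"
      using \<Omega>_sets by (rule set_integrable_const)
    have "(\<lambda>x. u x * W x) \<in> borel_measurable lebesgue"
      unfolding u_def W_def by (intro borel_measurable_times pi_D_measurable[OF D])
    then show "set_borel_measurable lebesgue \<Omega> (\<lambda>x. u x * W x)"
      unfolding set_borel_measurable_def
      by (intro borel_measurable_scaleR borel_measurable_indicator \<Omega>_sets(1))
    have Bu: "\<bar>u x\<bar> \<le> Bu" for x
      unfolding u_def Bu_def by (rule abs_pi_D_le_sum)
    have Bu_nonneg: "0 \<le> Bu"
      using order_trans[OF abs_ge_zero Bu] .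
    have "\<bar>u x * W x\<bar> \<le> \<bar>Bu * B\<bar>" for x
      using mult_mono[OF Bu W_bound Bu_nonneg abs_ge_zero] Bu_nonneg \<open>0 \<le> B\<close> by (simp add: abs_mult)
    then show "AE x in lebesgue. x \<in> \<Omega> \<longrightarrow> norm (u x * W x) \<le> norm (Bu * B)"
      by (intro AE_I2) simp
  qed
  have G_eq: "G = (\<lambda>x. real_of_ereal (Gamma_fun p p0 (u x)))"
    by (simp add: G_def u_def)
  have G_int: "set_integrable lebesgue \<Omega> G"
    using set_integral_diff(1)[OF energy(2) uW_int] by (simp add: G_eq)
  have "AE x in lebesgue. x \<in> \<Omega> \<longrightarrow> \<bar>u x * W x\<bar> \<le> G x / 2 + C"
    using energy(1)
  proof eventually_elim
    case (elim x)
    show ?case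
    proof
      assume "x \<in> \<Omega>"
      then have "B * \<bar>u x\<bar> \<le> G x / 2 + C"
        using Gamma_ge[of "u x"] elim by (simp add: G_eq)
      moreover have "\<bar>u x\<bar> * \<bar>W x\<bar> \<le> \<bar>u x\<bar> * B"
        using W_bound by (rule mult_left_mono) simp
      ultimately show "\<bar>u x * W x\<bar> \<le> G x / 2 + C" by (simp add: abs_mult mult.commute)
    qed
  qed
  note comparison = set_integral_comparison[OF \<Omega>_sets G_int uW_int this]
  have E_eq: "E = (LINT x:\<Omega>|lebesgue. G x) + (LINT x:\<Omega>|lebesgue. u x * W x)"
    using energy(3) set_integral_add(2)[OF G_int uW_int] by (simp add: E_def G_eq)
  show "set_integrable lebesgue \<Omega> G" by (rule G_int)
  show "E / 2 - C * measure lebesgue \<Omega> \<le> (LINT x:\<Omega>|lebesgue. G x)"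
    unfolding E_eq by (rule comparison(1))
  show "(LINT x:\<Omega>|lebesgue. G x) \<le> 2 * E + 2 * C * measure lebesgue \<Omega>"
    unfolding E_eq by (rule comparison(2))
qed

lemma open_polyhedral_lmeasurable: "open_polyhedral \<Omega> \<Longrightarrow> \<Omega> \<in> lmeasurable"
  by (intro lmeasurable_open) (auto simp: open_polyhedral_def)

lemma lipschitz_on_closure_bounded:
  fixes f :: "'a::euclidean_space \<Rightarrow> real"
  assumes "L-lipschitz_on (closure S) f" "bounded S"
  obtains B where "0 \<le> B" "\<And>x. x \<in> closure S \<Longrightarrow> \<bar>f x\<bar> \<le> B"
proof -
  have "continuous_on (closure S) f" using assms(1) by (rule lipschitz_on_continuous_on)
  moreover have "compact (closure S)" using assms(2) by (rule compact_closure[THEN iffD2])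
  ultimately show thesis
    using continuous_on_compact_bound[of "closure S" f] that by (metis real_norm_def)
qed

theorem lemma3p4:
  fixes p :: "real \<Rightarrow> real" and p0 :: ereal
    and V :: "real ^ 'd \<Rightarrow> real" and \<Omega> :: "(real ^ 'd) set"
  assumes dim: "CARD('d) = 2 \<or> CARD('d) = 3"
    and Omega: "open_polyhedral \<Omega>" "connected \<Omega>"
    and p_loc: "\<forall>b>0. set_integrable lborel {0..b} p"
    and p_ac: "\<forall>a b. 0 < a \<and> a < b \<longrightarrow> abs_continuous_on {a..b} p"
    and p_mono: "mono_on {0<..} p"
    and p_infty: "filterlim p at_top at_top"
    and p0: "((\<lambda>u. ereal (p u)) \<longlongrightarrow> p0) (at_right 0)"
    and p_odd: "p0 \<noteq> -\<infinity> \<Longrightarrow> \<forall>u\<le>0. p u = 2 * real_of_ereal p0 - p (- u)"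
    and V_lip: "\<exists>L. L-lipschitz_on (closure \<Omega>) V"
  shows "\<exists>C1 C2. \<forall>Mc cell xK Vs xs VK alpha omK omKs vc vs.
           discretization \<Omega> Mc cell xK Vs xs VK alpha omK omKs \<and>
           energy_D p p0 V \<Omega> Mc xK Vs xs VK omK omKs vc vs < \<infinity> \<longrightarrow>
           (let E = real_of_ereal (energy_D p p0 V \<Omega> Mc xK Vs xs VK omK omKs vc vs);
                G = (\<lambda>x. real_of_ereal (Gamma_fun p p0 (pi_D Mc Vs VK omK omKs vc vs x)))
            in set_integrable lebesgue \<Omega> G \<and>
               E / 2 + C1 \<le> (LINT x:\<Omega>|lebesgue. G x) \<and>
               (LINT x:\<Omega>|lebesgue. G x) \<le> 2 * E + C2)"
proof -
  interpret pressure_law p p0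
    using p_loc p_mono p_infty p0 p_odd by unfold_locales
  have \<Omega>: "\<Omega> \<in> lmeasurable" using Omega(1) by (rule open_polyhedral_lmeasurable)
  obtain L where "L-lipschitz_on (closure \<Omega>) V" using V_lip by blast
  then obtain B where "0 \<le> B" and V_bound: "\<And>x. x \<in> closure \<Omega> \<Longrightarrow> \<bar>V x\<bar> \<le> B"
    using Omega(1) lipschitz_on_closure_bounded by (metis open_polyhedral_def)
  obtain C where Gamma_ge:
    "\<And>v. Gamma_fun p p0 v \<noteq> \<infinity> \<Longrightarrow> B * \<bar>v\<bar> \<le> real_of_ereal (Gamma_fun p p0 v) / 2 + C"
    using Gamma_dominates_linear[OF \<open>0 \<le> B\<close>] by blast
  show ?thesis
    unfolding Let_def
    by (intro exI[of _ "- (C * measure lebesgue \<Omega>)"] exI[of _ "2 * C * measure lebesgue \<Omega>"]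
        allI impI; elim conjE)
      (simp add: Gamma_integral_bounds[OF _ _ \<Omega> V_bound \<open>0 \<le> B\<close> Gamma_ge])
qed

end
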